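(* Consider the system $x[k+1]=Ax[k]+w[k]$, $y[k]=Cx[k]+v[k]$, where $A=\mathrm{diag}(\lambda_1,\dots,\lambda_n)$ with $0\le|\lambda_i|<1$ for all $i$, the process noise covariance $W$ is diagonal (and positive semidefinite), and the measurement noise covariance is $V=\mathbf{0}$. Then for every sensor selection $\mu$: (a) for all $i\in\{1,\dots,n\}$, $W_{ii}\le(\Sigma(\mu))_{ii}\le \frac{W_{ii}}{1-\lambda_i^2}$; (b) if $W_{ii}=0$ for some $i$, then $(\Sigma(\mu))_{ii}=0$; (c) if $\lambda_i=0$ for some $i$, then $(\Sigma(\mu))_{ii}=W_{ii}$; (d) if for some $i$, $W_{ii}\neq0$ and the $i$th column of $C(\mu)$ is zero, then $(\Sigma(\mu))_{ii}=\frac{W_{ii}}{1-\lambda_i^2}$; (e) if for some $i$, $\mathbf{e}_i\in\mathrm{rowspace}(C(\mu))$, then $(\Sigma(\mu))_{ii}=W_{ii}$.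
   Context: Here $w[k]$ and $v[k]$ are uncorrelated zero-mean white Gaussian noise processes with covariances $W$ and $V$. The rows of $C$ are grouped into candidate sensors $i=1,\dots,q$ (sensor $i$ contributes rows $C_i$); a sensor selection is $\mu\in\{0,1\}^q$, and $C(\mu)$ stacks the $C_i$ with $\mu_i=1$, $V(\mu)$ being the corresponding (here zero) noise covariance. $\Sigma(\mu)$ is the limit as $k\to\infty$ of the a priori error covariance $\Sigma_{k|k-1}(\mu)$ of the Kalman filter using the selected sensors; it satisfies $\Sigma(\mu)=A\Sigma(\mu)A^T+W-A\Sigma(\mu)C(\mu)^T(C(\mu)\Sigma(\mu)C(\mu)^T+V(\mu))^{-1}C(\mu)\Sigma(\mu)A^T$, with inverses interpreted as pseudo-inverses when singular. $\mathbf{e}_i$ denotes the row vector with $1$ in position $i$ and zeros elsewhere. *)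

theory Defs
  imports Complex_Main "Jordan_Normal_Form.Matrix"
begin

text \<open>Moore-Penrose pseudo-inverse (the unique matrix satisfying the four Penrose conditions).
  For invertible M it coincides with the ordinary inverse.\<close>
definition pinv :: "real mat \<Rightarrow> real mat" where
  "pinv M = (THE X. X \<in> carrier_mat (dim_col M) (dim_row M) \<and> M * X * M = M \<and> X * M * X = X
        \<and> transpose_mat (M * X) = M * X \<and> transpose_mat (X * M) = X * M)"

text \<open>Stacked measurement matrix C(mu): rows of the selected sensors 0..q-1 (in order),
  each sensor i contributing the rows of Cs i (a matrix with n columns).\<close>
definition sel_C :: "nat \<Rightarrow> nat \<Rightarrow> (nat \<Rightarrow> real mat) \<Rightarrow> (nat \<Rightarrow> bool) \<Rightarrow> real mat" where
  "sel_C n q Cs mu = mat_of_rows n (concat (map (\<lambda>i. if mu i then rows (Cs i) else []) [0..<q]))"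

text \<open>A priori error covariance Sigma_{k|k-1} of the Kalman filter, starting from the
  initial covariance P0 = Sigma_{0|-1}.\<close>
primrec kf_prior :: "real mat \<Rightarrow> real mat \<Rightarrow> real mat \<Rightarrow> real mat \<Rightarrow> real mat \<Rightarrow> nat \<Rightarrow> real mat" where
  "kf_prior A W C V P0 0 = P0"
| "kf_prior A W C V P0 (Suc k) =
     (let P = kf_prior A W C V P0 k in
      A * P * transpose_mat A + W
      - A * P * transpose_mat C * pinv (C * P * transpose_mat C + V) * C * P * transpose_mat A)"

definition kf_limit :: "nat \<Rightarrow> real mat \<Rightarrow> real mat \<Rightarrow> real mat \<Rightarrow> real mat \<Rightarrow> real mat \<Rightarrow> real mat \<Rightarrow> bool" where
  "kf_limit n A W C V P0 S \<longleftrightarrow> S \<in> carrier_mat n n \<and>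
     (\<forall>a<n. \<forall>b<n. (\<lambda>k. kf_prior A W C V P0 k $$ (a, b)) \<longlonglongrightarrow> S $$ (a, b))"

definition psd_mat :: "nat \<Rightarrow> real mat \<Rightarrow> bool" where
  "psd_mat n P \<longleftrightarrow> P \<in> carrier_mat n n \<and> transpose_mat P = P \<and>
     (\<forall>x \<in> carrier_vec n. 0 \<le> x \<bullet> (P *\<^sub>v x))"

definition row_space :: "real mat \<Rightarrow> real vec set" where
  "row_space C = {transpose_mat C *\<^sub>v y | y. y \<in> carrier_vec (dim_row C)}"

end

theory Submission
  imports Defs "Jordan_Normal_Form.Determinant"
begin

text \<open>With \<open>V = 0\<close> the measurement update replaces the a priori covariance \<open>P\<close> by \<open>P - T\<close>,
  \<open>T = P C\<^sup>T (C P C\<^sup>T)\<^sup>+ C P\<close>. Both \<open>T\<close> and \<open>P - T\<close> are positive semidefinite, and the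
  quadratic form of \<open>P - T\<close> vanishes on the row space of \<open>C\<close>. For diagonal \<open>A\<close> the
  \<open>i\<close>-th diagonal entry of \<open>\<Sigma>\<^sub>k\<close> therefore obeys \<open>s\<^sub>k\<^sub>+\<^sub>1 = \<lambda>\<^sub>i\<^sup>2 p\<^sub>k + W\<^sub>i\<^sub>i\<close> with
  \<open>0 \<le> p\<^sub>k \<le> s\<^sub>k\<close>, which gives (a)--(c) in the limit; if \<open>e\<^sub>i\<close> lies in the row space
  then \<open>p\<^sub>k = 0\<close>, which gives (e). If the \<open>i\<close>-th column of \<open>C\<close> is zero, \<open>T\<close> does not depend on
  \<open>P\<^sub>i\<^sub>i\<close>, so \<open>\<Sigma>\<^sub>k - v\<^sub>k E\<^sub>i\<^sub>i\<close> stays positive semidefinite for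
  \<open>v\<^sub>k\<^sub>+\<^sub>1 = \<lambda>\<^sub>i\<^sup>2 v\<^sub>k + W\<^sub>i\<^sub>i\<close>, \<open>v\<^sub>0 = 0\<close>; as \<open>v\<^sub>k \<longrightarrow> W\<^sub>i\<^sub>i / (1 - \<lambda>\<^sub>i\<^sup>2)\<close>,
  this matches the upper bound of (a), which is (d).\<close>

lemma assoc_mult_mat_dims:
  fixes A :: "'a::semiring_0 mat"
  shows "dim_col A = dim_row B \<Longrightarrow> dim_col B = dim_row C \<Longrightarrow> A * B * C = A * (B * C)"
  by (rule assoc_mult_mat[of A "dim_row A" "dim_col A" B "dim_col B" C "dim_col C"]) auto

lemma transpose_mult_dims:
  fixes A :: "'a::comm_semiring_0 mat"
  shows "dim_col A = dim_row B \<Longrightarrow> transpose_mat (A * B) = transpose_mat B * transpose_mat A"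
  by (rule transpose_mult[of A "dim_row A" "dim_col A" B "dim_col B"]) auto

lemma assoc_mult_mat_vec_dims:
  fixes A :: "'a::comm_semiring_0 mat"
  shows "dim_col A = dim_row B \<Longrightarrow> dim_col B = dim_vec v \<Longrightarrow> A * B *\<^sub>v v = A *\<^sub>v (B *\<^sub>v v)"
  by (rule assoc_mult_mat_vec[of A "dim_row A" "dim_col A" B "dim_col B"]) auto

lemma transpose_vec_mult_scalar_dims:
  fixes A :: "'a::comm_semiring_0 mat"
  shows "dim_row A = dim_vec x \<Longrightarrow> dim_col A = dim_vec y \<Longrightarrow>
    x \<bullet> (A *\<^sub>v y) = (transpose_mat A *\<^sub>v x) \<bullet> y"
  by (rule transpose_vec_mult_scalar[of A "dim_row A" "dim_col A", symmetric]) auto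

lemma comm_scalar_prod_dims:
  fixes x :: "'a::comm_semiring_0 vec"
  shows "dim_vec x = dim_vec y \<Longrightarrow> x \<bullet> y = y \<bullet> x"
  by (rule comm_scalar_prod[of _ "dim_vec x"]) (auto intro: carrier_vecI)

lemma index_mult_mat_sum:
  "i < dim_row A \<Longrightarrow> j < dim_col B \<Longrightarrow> dim_col A = dim_row B \<Longrightarrow>
    (A * B) $$ (i, j) = (\<Sum>l<dim_row B. A $$ (i, l) * B $$ (l, j))"
  unfolding index_mult_mat(1) scalar_prod_def by (auto intro: sum.cong)

lemma index_mult_mat_vec_sum:
  "i < dim_row A \<Longrightarrow> dim_col A = dim_vec v \<Longrightarrow>
    (A *\<^sub>v v) $ i = (\<Sum>l<dim_vec v. A $$ (i, l) * v $ l)"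
  unfolding index_mult_mat_vec scalar_prod_def by (auto intro: sum.cong)

section \<open>The Moore--Penrose pseudo-inverse\<close>

definition is_pinv :: "real mat \<Rightarrow> real mat \<Rightarrow> bool" where
  "is_pinv M X \<longleftrightarrow> X \<in> carrier_mat (dim_col M) (dim_row M) \<and> M * X * M = M \<and> X * M * X = X
     \<and> transpose_mat (M * X) = M * X \<and> transpose_mat (X * M) = X * M"

lemma is_pinv_unique:
  assumes X: "is_pinv M X" and Y: "is_pinv M Y"
  shows "X = Y"
proof -
  from X have d: "dim_row X = dim_col M" "dim_col X = dim_row M" and X1: "M * X * M = M"
    and X2: "X * M * X = X" and X3: "transpose_mat (M * X) = M * X"
    and X4: "transpose_mat (X * M) = X * M"
    unfolding is_pinv_def by auto
  from Y have e: "dim_row Y = dim_col M" "dim_col Y = dim_row M" and Y1: "M * Y * M = M"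
    and Y2: "Y * M * Y = Y" and Y3: "transpose_mat (M * Y) = M * Y"
    and Y4: "transpose_mat (Y * M) = Y * M"
    unfolding is_pinv_def by auto
  note dims = d e assoc_mult_mat_dims transpose_mult_dims
  let ?Mt = "transpose_mat M" and ?Xt = "transpose_mat X" and ?Yt = "transpose_mat Y"
  have X3': "?Xt * ?Mt = M * X" and X4': "?Mt * ?Xt = X * M"
    using X3 X4 by (simp_all add: dims)
  have Y3': "?Yt * ?Mt = M * Y" and Y4': "?Mt * ?Yt = Y * M"
    using Y3 Y4 by (simp_all add: dims)
  have MtY: "?Mt = ?Mt * (?Yt * ?Mt)" and MtX: "?Mt = ?Mt * (?Xt * ?Mt)"
    using arg_cong[OF Y1, of transpose_mat] arg_cong[OF X1, of transpose_mat] by (simp_all add: dims)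
  have "X = X * (?Xt * ?Mt)" using X2 X3' by (simp add: dims)
  also have "\<dots> = X * ((?Xt * ?Mt) * (?Yt * ?Mt))"
    by (subst MtY) (simp add: dims)
  also have "\<dots> = (X * (M * X)) * (M * Y)" using X3' Y3' by (simp add: dims)
  also have "\<dots> = X * M * Y" using X2 by (simp add: dims)
  finally have XY: "X = X * M * Y" .
  have "Y = (?Mt * ?Yt) * Y" using Y2 Y4' by simp
  also have "\<dots> = ((?Mt * ?Xt) * (?Mt * ?Yt)) * Y"
    by (subst MtX) (simp add: dims)
  also have "\<dots> = (X * M) * ((Y * M) * Y)" using X4' Y4' by (simp add: dims)
  also have "\<dots> = X * M * Y" using Y2 by (simp add: dims)
  finally show ?thesis using XY by simp
qed

definition inj_mat :: "real mat \<Rightarrow> bool" where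
  "inj_mat B \<longleftrightarrow> (\<forall>x \<in> carrier_vec (dim_col B). B *\<^sub>v x = 0\<^sub>v (dim_row B) \<longrightarrow> x = 0\<^sub>v (dim_col B))"

definition rank_factorization :: "real mat \<Rightarrow> real mat \<Rightarrow> real mat \<Rightarrow> bool" where
  "rank_factorization M B F \<longleftrightarrow>
     M = B * F \<and> dim_col B = dim_row F \<and> inj_mat B \<and> inj_mat (transpose_mat F)"

lemma vec_Suc_eq_zeroI:
  assumes "x \<in> carrier_vec (Suc r)" "vec r (\<lambda>l. x $ l) = 0\<^sub>v r" "x $ r = (0::real)"
  shows "x = 0\<^sub>v (Suc r)"
proof (rule eq_vecI)
  fix l assume l: "l < dim_vec (0\<^sub>v (Suc r) :: real vec)"
  show "x $ l = 0\<^sub>v (Suc r) $ l"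
  proof (cases "l < r")
    case True
    have "vec r (\<lambda>l. x $ l) $ l = 0\<^sub>v r $ l" using assms(2) by simp
    then show ?thesis using True by simp
  qed (use assms l in \<open>auto simp: less_Suc_eq\<close>)
qed (use assms in auto)

lemma rank_factorization_extend_in_range:
  assumes M: "M \<in> carrier_mat k (Suc m)" and B: "B \<in> carrier_mat k r" and F: "F \<in> carrier_mat r m"
    and left: "\<And>i j. i < k \<Longrightarrow> j < m \<Longrightarrow> M $$ (i, j) = (B * F) $$ (i, j)"
    and B_inj: "inj_mat B" and F_inj: "inj_mat (transpose_mat F)"
    and y: "y \<in> carrier_vec r" and By: "B *\<^sub>v y = col M m"
  shows "\<exists>F'. rank_factorization M B F'"
proof -
  define F' where "F' = mat r (Suc m) (\<lambda>(l, j). if j < m then F $$ (l, j) else y $ l)"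
  have F': "F' \<in> carrier_mat r (Suc m)" unfolding F'_def by auto
  have col_F': "col F' j = (if j < m then col F j else y)" if "j < Suc m" for j
    using that F y unfolding F'_def by (auto simp: col_def)
  have "M = B * F'"
  proof (rule eq_matI)
    fix i j assume "i < dim_row (B * F')" "j < dim_col (B * F')"
    then have i: "i < k" and j: "j < Suc m" using B F' by auto
    show "M $$ (i, j) = (B * F') $$ (i, j)"
    proof (cases "j < m")
      case True
      then show ?thesis using left[OF i True] i j B F F' col_F' by simp
    next
      case False
      then have "j = m" using j by simp
      then show ?thesis
        using arg_cong[OF By, of "\<lambda>v. v $ i"] i B M F' col_F' by simp
    qed
  qed (use M B F' in auto)
  moreover have "inj_mat (transpose_mat F')"
    unfolding inj_mat_def
  proof (intro ballI impI)
    fix x assume x: "x \<in> carrier_vec (dim_col (transpose_mat F'))"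
      and F'x: "transpose_mat F' *\<^sub>v x = 0\<^sub>v (dim_row (transpose_mat F'))"
    have "transpose_mat F *\<^sub>v x = 0\<^sub>v m"
    proof (rule eq_vecI)
      fix j assume "j < dim_vec (0\<^sub>v m :: real vec)"
      then have j: "j < m" by simp
      have "(transpose_mat F *\<^sub>v x) $ j = (transpose_mat F' *\<^sub>v x) $ j"
        using j F F' col_F'[of j] by simp
      then show "(transpose_mat F *\<^sub>v x) $ j = 0\<^sub>v m $ j" using F'x F' j by simp
    qed (use F in auto)
    then show "x = 0\<^sub>v (dim_col (transpose_mat F'))"
      using F_inj x F F' unfolding inj_mat_def by auto
  qed
  ultimately show ?thesis using B F' B_inj unfolding rank_factorization_def by auto
qed

lemma rank_factorization_extend_out_of_range:
  assumes M: "M \<in> carrier_mat k (Suc m)" and B: "B \<in> carrier_mat k r" and F: "F \<in> carrier_mat r m"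
    and left: "\<And>i j. i < k \<Longrightarrow> j < m \<Longrightarrow> M $$ (i, j) = (B * F) $$ (i, j)"
    and B_inj: "inj_mat B" and F_inj: "inj_mat (transpose_mat F)"
    and out: "\<forall>y \<in> carrier_vec r. B *\<^sub>v y \<noteq> col M m"
  shows "\<exists>B' F'. rank_factorization M B' F'"
proof -
  define c where "c = col M m"
  define B' where "B' = mat k (Suc r) (\<lambda>(i, l). if l < r then B $$ (i, l) else c $ i)"
  define F' where "F' = mat (Suc r) (Suc m)
    (\<lambda>(l, j). if l < r then (if j < m then F $$ (l, j) else 0) else (if j < m then 0 else 1))"
  have B': "B' \<in> carrier_mat k (Suc r)" and F': "F' \<in> carrier_mat (Suc r) (Suc m)"
    unfolding B'_def F'_def by auto
  have c: "c \<in> carrier_vec k" unfolding c_def using M by auto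
  have B'x: "(B' *\<^sub>v x) $ i = (B *\<^sub>v vec r (\<lambda>l. x $ l)) $ i + x $ r * c $ i"
    if "x \<in> carrier_vec (Suc r)" "i < k" for x i
    using that B B' by (simp add: index_mult_mat_vec_sum B'_def del: index_mult_mat_vec)
  have F'x: "(transpose_mat F' *\<^sub>v x) $ j =
      (if j < m then (transpose_mat F *\<^sub>v vec r (\<lambda>l. x $ l)) $ j else x $ r)"
    if "x \<in> carrier_vec (Suc r)" "j < Suc m" for x j
    using that F F' by (auto simp: index_mult_mat_vec_sum F'_def simp del: index_mult_mat_vec)
  have "M = B' * F'"
  proof (rule eq_matI)
    fix i j assume "i < dim_row (B' * F')" "j < dim_col (B' * F')"
    then have i: "i < k" and j: "j < Suc m" using B' F' by auto
    have "(B' * F') $$ (i, j) = (\<Sum>l<r. B' $$ (i, l) * F' $$ (l, j)) + B' $$ (i, r) * F' $$ (r, j)"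
      using i j B' F' by (simp add: index_mult_mat_sum del: index_mult_mat)
    also have "\<dots> = M $$ (i, j)"
      using left[OF i] i j B F M
      by (cases "j < m")
        (auto simp: B'_def F'_def c_def index_mult_mat_sum less_Suc_eq simp del: index_mult_mat)
    finally show "M $$ (i, j) = (B' * F') $$ (i, j)" by simp
  qed (use M B' F' in auto)
  moreover have "inj_mat B'"
    unfolding inj_mat_def
  proof (intro ballI impI)
    fix x assume "x \<in> carrier_vec (dim_col B')" and B'x0: "B' *\<^sub>v x = 0\<^sub>v (dim_row B')"
    then have x: "x \<in> carrier_vec (Suc r)" using B' by simp
    define x0 where "x0 = vec r (\<lambda>l. x $ l)"
    have x0: "x0 \<in> carrier_vec r" unfolding x0_def by simp
    have comp: "(B *\<^sub>v x0) $ i = - (x $ r * c $ i)" if "i < k" for i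
      using B'x[OF x that] arg_cong[OF B'x0, of "\<lambda>v. v $ i"] that B' unfolding x0_def by simp
    have xr: "x $ r = 0"
    proof (rule ccontr)
      assume "x $ r \<noteq> 0"
      then have "B *\<^sub>v ((- 1 / x $ r) \<cdot>\<^sub>v x0) = c"
        using comp B x0 c by (intro eq_vecI) (auto simp: mult_mat_vec field_simps)
      then show False using out x0 unfolding c_def by auto
    qed
    have "B *\<^sub>v x0 = 0\<^sub>v k" using comp xr B by (intro eq_vecI) auto
    then have "x0 = 0\<^sub>v r" using B_inj x0 B unfolding inj_mat_def by auto
    then show "x = 0\<^sub>v (dim_col B')" using vec_Suc_eq_zeroI[OF x _ xr] B' unfolding x0_def by simp
  qed
  moreover have "inj_mat (transpose_mat F')"
    unfolding inj_mat_def
  proof (intro ballI impI)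
    fix x assume "x \<in> carrier_vec (dim_col (transpose_mat F'))"
      and F'x0: "transpose_mat F' *\<^sub>v x = 0\<^sub>v (dim_row (transpose_mat F'))"
    then have x: "x \<in> carrier_vec (Suc r)" using F' by simp
    have comp: "(transpose_mat F' *\<^sub>v x) $ j = 0" if "j < Suc m" for j
      using arg_cong[OF F'x0, of "\<lambda>v. v $ j"] that F' by simp
    have xr: "x $ r = 0" using comp[of m] F'x[OF x, of m] by simp
    have "transpose_mat F *\<^sub>v vec r (\<lambda>l. x $ l) = 0\<^sub>v m"
    proof (rule eq_vecI)
      fix j assume "j < dim_vec (0\<^sub>v m :: real vec)"
      then show "(transpose_mat F *\<^sub>v vec r (\<lambda>l. x $ l)) $ j = 0\<^sub>v m $ j"
        using comp[of j] F'x[OF x, of j] by simp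
    qed (use F in auto)
    then have "vec r (\<lambda>l. x $ l) = 0\<^sub>v r" using F_inj F unfolding inj_mat_def by auto
    then show "x = 0\<^sub>v (dim_col (transpose_mat F'))" using vec_Suc_eq_zeroI[OF x _ xr] F' by simp
  qed
  ultimately have "rank_factorization M B' F'" using B' F' unfolding rank_factorization_def by auto
  then show ?thesis by blast
qed

lemma rank_factorization_exists: "\<exists>B F. rank_factorization M B F"
proof -
  have "\<exists>B F. rank_factorization M B F" if "M \<in> carrier_mat k m" for M k m
    using that
  proof (induction m arbitrary: M)
    case 0
    have "rank_factorization M (0\<^sub>m k 0) (0\<^sub>m 0 0)"
      using 0 unfolding rank_factorization_def inj_mat_def by (auto intro!: eq_vecI eq_matI)
    then show ?case by blast
  next
    case (Suc m)
    define M0 where "M0 = mat k m (\<lambda>(i, j). M $$ (i, j))"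
    obtain B F where "rank_factorization M0 B F" using Suc.IH[of M0] unfolding M0_def by auto
    then have M0: "M0 = B * F" and BF: "dim_col B = dim_row F"
      and B_inj: "inj_mat B" and F_inj: "inj_mat (transpose_mat F)"
      unfolding rank_factorization_def by auto
    have B: "B \<in> carrier_mat k (dim_col B)" and F: "F \<in> carrier_mat (dim_col B) m"
      using arg_cong[OF M0, of dim_row] arg_cong[OF M0, of dim_col] BF unfolding M0_def by auto
    have left: "M $$ (i, j) = (B * F) $$ (i, j)" if "i < k" "j < m" for i j
      using that unfolding M0[symmetric] M0_def by simp
    show ?case
    proof (cases "\<exists>y \<in> carrier_vec (dim_col B). B *\<^sub>v y = col M m")
      case True
      then show ?thesis
        using rank_factorization_extend_in_range[OF Suc.prems B F left B_inj F_inj] by blast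
    next
      case False
      then show ?thesis
        using rank_factorization_extend_out_of_range[OF Suc.prems B F left B_inj F_inj] by blast
    qed
  qed
  then show ?thesis by blast
qed

lemma gram_mat_inverse:
  assumes B: "B \<in> carrier_mat k r" and B_inj: "inj_mat B"
  shows "\<exists>G. G \<in> carrier_mat r r \<and> (transpose_mat B * B) * G = 1\<^sub>m r
     \<and> G * (transpose_mat B * B) = 1\<^sub>m r \<and> transpose_mat G = G"
proof -
  let ?N = "transpose_mat B * B"
  have N: "?N \<in> carrier_mat r r" using B by auto
  have "det ?N \<noteq> 0"
  proof
    assume "det ?N = 0"
    then obtain v where v: "v \<in> carrier_vec r" "v \<noteq> 0\<^sub>v r" "?N *\<^sub>v v = 0\<^sub>v r"
      using det_0_iff_vec_prod_zero_field[OF N] by blast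
    have "(B *\<^sub>v v) \<bullet> (B *\<^sub>v v) = v \<bullet> (?N *\<^sub>v v)"
      using B v by (simp add: transpose_vec_mult_scalar_dims assoc_mult_mat_vec_dims
          comm_scalar_prod_dims)
    then have "(B *\<^sub>v v) \<bullet> (B *\<^sub>v v) = 0" using v by simp
    then have "B *\<^sub>v v = 0\<^sub>v k"
      using B by (auto simp: scalar_prod_def sum_nonneg_eq_0_iff intro!: eq_vecI)
    then show False using B_inj v B unfolding inj_mat_def by auto
  qed
  from det_non_zero_imp_unit[OF N this, of "()"]
  obtain G where G: "G \<in> carrier_mat r r" and GN: "G * ?N = 1\<^sub>m r" and NG: "?N * G = 1\<^sub>m r"
    unfolding Units_def ring_mat_def by auto
  have NT: "transpose_mat ?N = ?N" using B by (simp add: transpose_mult_dims)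
  have "transpose_mat G = transpose_mat G * (?N * G)" using NG G by simp
  also have "\<dots> = transpose_mat (?N * G) * G"
    using G B NT by (simp add: assoc_mult_mat_dims transpose_mult_dims)
  also have "\<dots> = G" using NG G by simp
  finally show ?thesis using G GN NG by blast
qed

text \<open>For a rank factorization \<open>M = B F\<close> the pseudo-inverse is
  \<open>F\<^sup>T (F F\<^sup>T)\<inverse> (B\<^sup>T B)\<inverse> B\<^sup>T\<close>.\<close>

lemma is_pinv_exists: "\<exists>X. is_pinv M X"
proof -
  obtain B F where "rank_factorization M B F" using rank_factorization_exists by blast
  then have MBF: "M = B * F" and B_inj: "inj_mat B" and F_inj: "inj_mat (transpose_mat F)"
    and BF: "dim_col B = dim_row F"
    unfolding rank_factorization_def by auto
  define r where "r = dim_col B"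
  have B: "B \<in> carrier_mat (dim_row M) r" and F: "F \<in> carrier_mat r (dim_col M)"
    and Ft: "transpose_mat F \<in> carrier_mat (dim_col M) r"
    unfolding MBF r_def using BF by auto
  obtain G1 where G1: "G1 \<in> carrier_mat r r" and G1a: "(transpose_mat B * B) * G1 = 1\<^sub>m r"
    and G1b: "G1 * (transpose_mat B * B) = 1\<^sub>m r" and G1s: "transpose_mat G1 = G1"
    using gram_mat_inverse[OF B B_inj] by blast
  obtain G2 where G2: "G2 \<in> carrier_mat r r" and G2a: "(F * transpose_mat F) * G2 = 1\<^sub>m r"
    and G2b: "G2 * (F * transpose_mat F) = 1\<^sub>m r" and G2s: "transpose_mat G2 = G2"
    using gram_mat_inverse[OF Ft F_inj] by auto
  define X where "X = transpose_mat F * G2 * G1 * transpose_mat B"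
  note dims = carrier_matD[OF B] carrier_matD[OF F] carrier_matD[OF G1] carrier_matD[OF G2]
    assoc_mult_mat_dims transpose_mult_dims
  have cancel: "transpose_mat B * (B * (G1 * Z)) = Z" "G1 * (transpose_mat B * (B * Z)) = Z"
    "F * (transpose_mat F * (G2 * Z)) = Z" "G2 * (F * (transpose_mat F * Z)) = Z"
    if "dim_row Z = r" for Z :: "real mat"
  proof -
    have "transpose_mat B * (B * (G1 * Z)) = ((transpose_mat B * B) * G1) * Z"
      and "G1 * (transpose_mat B * (B * Z)) = (G1 * (transpose_mat B * B)) * Z"
      and "F * (transpose_mat F * (G2 * Z)) = ((F * transpose_mat F) * G2) * Z"
      and "G2 * (F * (transpose_mat F * Z)) = (G2 * (F * transpose_mat F)) * Z"
      using that by (simp_all add: dims)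
    then show "transpose_mat B * (B * (G1 * Z)) = Z" "G1 * (transpose_mat B * (B * Z)) = Z"
      "F * (transpose_mat F * (G2 * Z)) = Z" "G2 * (F * (transpose_mat F * Z)) = Z"
      using G1a G1b G2a G2b that by simp_all
  qed
  have MX: "M * X = B * (G1 * transpose_mat B)" unfolding MBF X_def by (simp add: dims cancel)
  have XM: "X * M = transpose_mat F * (G2 * F)" unfolding MBF X_def by (simp add: dims cancel)
  have "is_pinv M X" unfolding is_pinv_def
  proof (intro conjI)
    show "X \<in> carrier_mat (dim_col M) (dim_row M)" unfolding X_def using B F G1 G2 by auto
    show "M * X * M = M" unfolding MX unfolding MBF by (simp add: dims cancel)
    show "X * M * X = X" unfolding XM unfolding X_def by (simp add: dims cancel)
    show "transpose_mat (M * X) = M * X" unfolding MX by (simp add: dims G1s)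
    show "transpose_mat (X * M) = X * M" unfolding XM by (simp add: dims G2s)
  qed
  then show ?thesis by blast
qed

lemma pinv_is_pinv: "is_pinv M (pinv M)"
proof -
  have "\<exists>!X. is_pinv M X" using is_pinv_exists is_pinv_unique by blast
  then have "is_pinv M (THE X. is_pinv M X)" by (rule theI')
  then show ?thesis unfolding pinv_def is_pinv_def .
qed

lemma pinv_carrier: "M \<in> carrier_mat a b \<Longrightarrow> pinv M \<in> carrier_mat b a"
  using pinv_is_pinv[of M] unfolding is_pinv_def by auto

lemma pinv_symmetric:
  assumes Ms: "transpose_mat M = M"
  shows "transpose_mat (pinv M) = pinv M"
proof -
  have X: "is_pinv M (pinv M)" by (rule pinv_is_pinv)
  then have X1: "M * pinv M * M = M" and X2: "pinv M * M * pinv M = pinv M"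
    and X3: "transpose_mat (M * pinv M) = M * pinv M"
    and X4: "transpose_mat (pinv M * M) = pinv M * M"
    and Xc: "pinv M \<in> carrier_mat (dim_col M) (dim_row M)"
    unfolding is_pinv_def by auto
  have sq: "dim_col M = dim_row M" using arg_cong[OF Ms, of dim_row] by simp
  note dims = sq carrier_matD[OF Xc] assoc_mult_mat_dims transpose_mult_dims
  have "is_pinv M (transpose_mat (pinv M))"
    unfolding is_pinv_def
  proof (intro conjI)
    show "transpose_mat (pinv M) \<in> carrier_mat (dim_col M) (dim_row M)" using Xc sq by auto
    show "M * transpose_mat (pinv M) * M = M"
      using arg_cong[OF X1, of transpose_mat] Ms by (simp add: dims)
    show "transpose_mat (pinv M) * M * transpose_mat (pinv M) = transpose_mat (pinv M)"
      using arg_cong[OF X2, of transpose_mat] Ms by (simp add: dims)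
    show "transpose_mat (M * transpose_mat (pinv M)) = M * transpose_mat (pinv M)"
      using X4 Ms by (simp add: dims)
    show "transpose_mat (transpose_mat (pinv M) * M) = transpose_mat (pinv M) * M"
      using X3 Ms by (simp add: dims)
  qed
  then show ?thesis using is_pinv_unique X by blast
qed

section \<open>Positive semidefinite matrices\<close>

lemma quadratic_form_unit_vec:
  "P \<in> carrier_mat n n \<Longrightarrow> i < n \<Longrightarrow> unit_vec n i \<bullet> (P *\<^sub>v unit_vec n i) = (P $$ (i, i) :: real)"
  by simp

lemma psd_mat_diag_nonneg:
  assumes "psd_mat n P" "i < n"
  shows "0 \<le> P $$ (i, i)"
proof -
  have P: "P \<in> carrier_mat n n" using assms(1) unfolding psd_mat_def by simp
  have "0 \<le> unit_vec n i \<bullet> (P *\<^sub>v unit_vec n i)" using assms unfolding psd_mat_def by auto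
  also have "unit_vec n i \<bullet> (P *\<^sub>v unit_vec n i) = P $$ (i, i)"
    by (rule quadratic_form_unit_vec[OF P assms(2)])
  finally show ?thesis .
qed

lemma psd_mat_congruence:
  assumes Q: "psd_mat n Q" and A: "A \<in> carrier_mat m n"
  shows "psd_mat m (A * Q * transpose_mat A)"
  unfolding psd_mat_def
proof (intro conjI ballI)
  from Q have Qc: "Q \<in> carrier_mat n n" and Qs: "transpose_mat Q = Q"
    and Qq: "\<forall>x\<in>carrier_vec n. 0 \<le> x \<bullet> (Q *\<^sub>v x)" unfolding psd_mat_def by auto
  note dims = carrier_matD[OF A] carrier_matD[OF Qc]
  show "A * Q * transpose_mat A \<in> carrier_mat m m" using A Qc by auto
  show "transpose_mat (A * Q * transpose_mat A) = A * Q * transpose_mat A"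
    by (simp add: dims assoc_mult_mat_dims transpose_mult_dims Qs)
  fix x :: "real vec" assume x: "x \<in> carrier_vec m"
  have "x \<bullet> ((A * Q * transpose_mat A) *\<^sub>v x) = (transpose_mat A *\<^sub>v x) \<bullet> (Q *\<^sub>v (transpose_mat A *\<^sub>v x))"
    using x by (simp add: dims assoc_mult_mat_dims assoc_mult_mat_vec_dims transpose_vec_mult_scalar_dims)
  then show "0 \<le> x \<bullet> ((A * Q * transpose_mat A) *\<^sub>v x)" using Qq x A by auto
qed

lemma psd_mat_add: "psd_mat n P \<Longrightarrow> psd_mat n Q \<Longrightarrow> psd_mat n (P + Q)"
  unfolding psd_mat_def
  by (auto simp: transpose_add add_mult_distrib_mat_vec add_scalar_prod_distrib
      scalar_prod_add_distrib[of _ n])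

lemma psd_mat_diagonal:
  assumes D: "D \<in> carrier_mat n n" and off: "\<forall>a<n. \<forall>b<n. a \<noteq> b \<longrightarrow> D $$ (a, b) = 0"
    and nonneg: "\<forall>a<n. 0 \<le> D $$ (a, a)"
  shows "psd_mat n D"
  unfolding psd_mat_def
proof (intro conjI ballI)
  show "transpose_mat D = D" using D off by (intro eq_matI) (auto, metis)
  fix x :: "real vec" assume x: "x \<in> carrier_vec n"
  have Dx: "(D *\<^sub>v x) $ a = D $$ (a, a) * x $ a" if "a < n" for a
  proof -
    have "(D *\<^sub>v x) $ a = (\<Sum>b<n. D $$ (a, b) * x $ b)"
      using that D x by (simp add: index_mult_mat_vec_sum del: index_mult_mat_vec)
    also have "\<dots> = (\<Sum>b<n. if b = a then D $$ (a, a) * x $ a else 0)"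
      using off that by (intro sum.cong) auto
    finally show ?thesis using that by simp
  qed
  have "x \<bullet> (D *\<^sub>v x) = (\<Sum>a<n. D $$ (a, a) * (x $ a)\<^sup>2)"
    using x D Dx unfolding scalar_prod_def by (auto simp: power2_eq_square intro: sum.cong)
  also have "\<dots> \<ge> 0" using nonneg by (intro sum_nonneg) auto
  finally show "0 \<le> x \<bullet> (D *\<^sub>v x)" .
qed (use D in auto)

lemma pinv_psd:
  assumes M: "psd_mat d M"
  shows "psd_mat d (pinv M)"
  unfolding psd_mat_def
proof (intro conjI ballI)
  have Mc: "M \<in> carrier_mat d d" and Ms: "transpose_mat M = M" and Mq: "\<forall>x\<in>carrier_vec d. 0 \<le> x \<bullet> (M *\<^sub>v x)"
    using M unfolding psd_mat_def by auto
  have X: "is_pinv M (pinv M)" by (rule pinv_is_pinv)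
  then show Xc: "pinv M \<in> carrier_mat d d" using Mc unfolding is_pinv_def by auto
  show Xs: "transpose_mat (pinv M) = pinv M" using pinv_symmetric[OF Ms] .
  fix w :: "real vec" assume w: "w \<in> carrier_vec d"
  have "w \<bullet> (pinv M *\<^sub>v w) = w \<bullet> ((pinv M * M * pinv M) *\<^sub>v w)"
    using X unfolding is_pinv_def by simp
  also have "\<dots> = (pinv M *\<^sub>v w) \<bullet> (M *\<^sub>v (pinv M *\<^sub>v w))"
    using w Mc Xc Xs by (simp add: assoc_mult_mat_vec_dims transpose_vec_mult_scalar_dims)
  also have "\<dots> \<ge> 0" using Mq Xc w by auto
  finally show "0 \<le> w \<bullet> (pinv M *\<^sub>v w)" .
qed

section \<open>The noiseless measurement update\<close>

definition kf_reduction :: "real mat \<Rightarrow> real mat \<Rightarrow> real mat" where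
  "kf_reduction C P =
     P * transpose_mat C * pinv (C * P * transpose_mat C + 0\<^sub>m (dim_row C) (dim_row C)) * C * P"

lemma kf_reduction_carrier:
  "C \<in> carrier_mat d n \<Longrightarrow> P \<in> carrier_mat n n \<Longrightarrow> kf_reduction C P \<in> carrier_mat n n"
  using pinv_carrier[of "C * P * transpose_mat C + 0\<^sub>m d d" d d]
  unfolding kf_reduction_def by auto

lemma kf_reduction_mult_vec:
  assumes C: "C \<in> carrier_mat d n" and P: "P \<in> carrier_mat n n" and x: "x \<in> carrier_vec n"
  shows "kf_reduction C P *\<^sub>v x =
    P *\<^sub>v (transpose_mat C *\<^sub>v (pinv (C * P * transpose_mat C) *\<^sub>v (C *\<^sub>v (P *\<^sub>v x))))"
proof -
  have "pinv (C * P * transpose_mat C) \<in> carrier_mat d d"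
    using C P by (intro pinv_carrier) auto
  then show ?thesis
    using C P x unfolding kf_reduction_def by (simp add: assoc_mult_mat_dims assoc_mult_mat_vec_dims)
qed

lemma kf_reduction_psd:
  assumes C: "C \<in> carrier_mat d n" and P: "psd_mat n P"
  shows "psd_mat n (kf_reduction C P)"
proof -
  have Pc: "P \<in> carrier_mat n n" and Ps: "transpose_mat P = P" using P unfolding psd_mat_def by auto
  have M: "psd_mat d (C * P * transpose_mat C)" by (rule psd_mat_congruence[OF P C])
  have Xc: "pinv (C * P * transpose_mat C) \<in> carrier_mat d d"
    using pinv_psd[OF M] unfolding psd_mat_def by auto
  have "kf_reduction C P =
    (P * transpose_mat C) * pinv (C * P * transpose_mat C) * transpose_mat (P * transpose_mat C)"
    using C Pc Xc Ps unfolding kf_reduction_def by (simp add: assoc_mult_mat_dims transpose_mult_dims)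
  then show ?thesis using psd_mat_congruence[OF pinv_psd[OF M]] C Pc by simp
qed

lemma kf_reduction_quadratic:
  assumes C: "C \<in> carrier_mat d n" and P: "psd_mat n P" and x: "x \<in> carrier_vec n"
  shows "x \<bullet> (kf_reduction C P *\<^sub>v x) =
    (C *\<^sub>v (P *\<^sub>v x)) \<bullet> (pinv (C * P * transpose_mat C) *\<^sub>v (C *\<^sub>v (P *\<^sub>v x)))"
proof -
  have Pc: "P \<in> carrier_mat n n" and Ps: "transpose_mat P = P" using P unfolding psd_mat_def by auto
  have Xc: "pinv (C * P * transpose_mat C) \<in> carrier_mat d d"
    using pinv_psd[OF psd_mat_congruence[OF P C]] unfolding psd_mat_def by auto
  show ?thesis
    using C Pc Ps Xc x by (simp add: kf_reduction_mult_vec transpose_vec_mult_scalar_dims)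
qed

lemma kf_posterior_psd:
  assumes C: "C \<in> carrier_mat d n" and P: "psd_mat n P"
  shows "psd_mat n (P - kf_reduction C P)"
  unfolding psd_mat_def
proof (intro conjI ballI)
  have Pc: "P \<in> carrier_mat n n" and Ps: "transpose_mat P = P"
    and Pq: "\<forall>x\<in>carrier_vec n. 0 \<le> x \<bullet> (P *\<^sub>v x)" using P unfolding psd_mat_def by auto
  have T: "psd_mat n (kf_reduction C P)" by (rule kf_reduction_psd[OF C P])
  then have Tc: "kf_reduction C P \<in> carrier_mat n n" and Ts: "transpose_mat (kf_reduction C P) = kf_reduction C P"
    unfolding psd_mat_def by auto
  show "P - kf_reduction C P \<in> carrier_mat n n" by (rule minus_carrier_mat[OF Tc])
  show "transpose_mat (P - kf_reduction C P) = P - kf_reduction C P"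
    using Pc Tc Ps Ts by (simp add: transpose_minus)
  define M where "M = C * P * transpose_mat C"
  have M: "psd_mat d M" unfolding M_def by (rule psd_mat_congruence[OF P C])
  have Xc: "pinv M \<in> carrier_mat d d" and Xs: "transpose_mat (pinv M) = pinv M"
    and Mc: "M \<in> carrier_mat d d"
    using pinv_psd[OF M] M unfolding psd_mat_def by auto
  have XMX: "pinv M * M * pinv M = pinv M" using pinv_is_pinv[of M] unfolding is_pinv_def by simp
  fix x :: "real vec" assume x: "x \<in> carrier_vec n"
  define w where "w = C *\<^sub>v (P *\<^sub>v x)"
  define z where "z = pinv M *\<^sub>v w"
  define u where "u = transpose_mat C *\<^sub>v z"
  have w: "w \<in> carrier_vec d" and z: "z \<in> carrier_vec d" and u: "u \<in> carrier_vec n"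
    unfolding w_def z_def u_def using C Pc Xc x by auto
  have xTx: "x \<bullet> (kf_reduction C P *\<^sub>v x) = w \<bullet> z"
    unfolding w_def z_def M_def by (rule kf_reduction_quadratic[OF C P x])
  have xPu: "x \<bullet> (P *\<^sub>v u) = w \<bullet> z"
    using x z C Pc Ps unfolding u_def w_def by (simp add: transpose_vec_mult_scalar_dims)
  have "u \<bullet> (P *\<^sub>v x) = (P *\<^sub>v u) \<bullet> x"
    using transpose_vec_mult_scalar_dims[of P u x] u x Pc Ps by simp
  also have "\<dots> = x \<bullet> (P *\<^sub>v u)" using comm_scalar_prod_dims[of "P *\<^sub>v u" x] u x Pc by simp
  finally have uPx: "u \<bullet> (P *\<^sub>v x) = w \<bullet> z" using xPu by simp
  have "w \<bullet> z = w \<bullet> ((pinv M * M * pinv M) *\<^sub>v w)" unfolding z_def XMX ..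
  also have "\<dots> = z \<bullet> (M *\<^sub>v z)"
    using w Mc Xc Xs unfolding z_def by (simp add: assoc_mult_mat_vec_dims transpose_vec_mult_scalar_dims)
  also have "\<dots> = u \<bullet> (P *\<^sub>v u)"
    using z C Pc unfolding u_def M_def
    by (simp add: assoc_mult_mat_vec_dims assoc_mult_mat_dims transpose_vec_mult_scalar_dims)
  finally have uPu: "u \<bullet> (P *\<^sub>v u) = w \<bullet> z" ..
  have "0 \<le> (x - u) \<bullet> (P *\<^sub>v (x - u))" using Pq x u by auto
  also have "\<dots> = x \<bullet> (P *\<^sub>v x) - x \<bullet> (P *\<^sub>v u) - (u \<bullet> (P *\<^sub>v x) - u \<bullet> (P *\<^sub>v u))"
    using x u Pc by (simp add: mult_minus_distrib_mat_vec minus_scalar_prod_distrib[of _ n]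
        scalar_prod_minus_distrib[of _ n])
  also have "\<dots> = x \<bullet> ((P - kf_reduction C P) *\<^sub>v x)"
    using x Pc Tc xTx xPu uPx uPu
    by (simp add: minus_mult_distrib_mat_vec scalar_prod_minus_distrib[of _ n])
  finally show "0 \<le> x \<bullet> ((P - kf_reduction C P) *\<^sub>v x)" .
qed

lemma kf_posterior_row_space:
  assumes C: "C \<in> carrier_mat d n" and P: "psd_mat n P" and v: "v \<in> row_space C"
  shows "v \<bullet> ((P - kf_reduction C P) *\<^sub>v v) = 0"
proof -
  have Pc: "P \<in> carrier_mat n n" using P unfolding psd_mat_def by auto
  define M where "M = C * P * transpose_mat C"
  have Mc: "M \<in> carrier_mat d d" and Ms: "transpose_mat M = M" and Xc: "pinv M \<in> carrier_mat d d"
    using psd_mat_congruence[OF P C] pinv_psd[OF psd_mat_congruence[OF P C]]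
    unfolding psd_mat_def M_def by auto
  have MXM: "M * pinv M * M = M" using pinv_is_pinv[of M] unfolding is_pinv_def by simp
  obtain y where y: "y \<in> carrier_vec d" and vy: "v = transpose_mat C *\<^sub>v y"
    using v C unfolding row_space_def by auto
  have vc: "v \<in> carrier_vec n" using C y vy by auto
  have CPv: "C *\<^sub>v (P *\<^sub>v v) = M *\<^sub>v y"
    unfolding vy M_def using y C Pc by (simp add: assoc_mult_mat_vec_dims assoc_mult_mat_dims)
  have "v \<bullet> (kf_reduction C P *\<^sub>v v) = (M *\<^sub>v y) \<bullet> (pinv M *\<^sub>v (M *\<^sub>v y))"
    using kf_reduction_quadratic[OF C P vc] unfolding CPv M_def .
  also have "\<dots> = y \<bullet> (M *\<^sub>v (pinv M *\<^sub>v (M *\<^sub>v y)))"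
    using transpose_vec_mult_scalar_dims[of M y "pinv M *\<^sub>v (M *\<^sub>v y)"] Ms y Mc Xc by simp
  also have "\<dots> = y \<bullet> ((M * pinv M * M) *\<^sub>v y)"
    using y Mc Xc by (simp add: assoc_mult_mat_vec_dims)
  also have "\<dots> = y \<bullet> (M *\<^sub>v y)" unfolding MXM ..
  also have "\<dots> = v \<bullet> (P *\<^sub>v v)"
    unfolding vy M_def using y C Pc
    by (simp add: assoc_mult_mat_vec_dims assoc_mult_mat_dims transpose_vec_mult_scalar_dims)
  finally show ?thesis
    using vc Pc kf_reduction_carrier[OF C Pc]
    by (simp add: minus_mult_distrib_mat_vec scalar_prod_minus_distrib[of _ n])
qed

section \<open>The covariance recursion for diagonal dynamics\<close>

lemma kf_prior_Suc_posterior: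
  assumes A: "A \<in> carrier_mat n n" and C: "C \<in> carrier_mat d n" and W: "W \<in> carrier_mat n n"
    and P: "kf_prior A W C (0\<^sub>m d d) P0 k \<in> carrier_mat n n"
  defines "P \<equiv> kf_prior A W C (0\<^sub>m d d) P0 k"
  shows "kf_prior A W C (0\<^sub>m d d) P0 (Suc k) = A * (P - kf_reduction C P) * transpose_mat A + W"
proof -
  have Pc: "P \<in> carrier_mat n n" using P unfolding P_def .
  have T: "kf_reduction C P \<in> carrier_mat n n" by (rule kf_reduction_carrier[OF C Pc])
  have Xc: "pinv (C * P * transpose_mat C + 0\<^sub>m d d) \<in> carrier_mat d d"
    using C Pc by (intro pinv_carrier) auto
  have "A * P * transpose_mat C * pinv (C * P * transpose_mat C + 0\<^sub>m d d) * C * P * transpose_mat A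
      = A * kf_reduction C P * transpose_mat A"
    using A C Pc Xc unfolding kf_reduction_def by (simp add: assoc_mult_mat_dims)
  moreover have "A * (P - kf_reduction C P) * transpose_mat A =
      A * P * transpose_mat A - A * kf_reduction C P * transpose_mat A"
    using A Pc T by (simp add: mult_minus_distrib_mat[of _ n n] minus_mult_distrib_mat[of _ n n])
  ultimately show ?thesis
    using A Pc T W C unfolding P_def by (auto simp: Let_def intro!: eq_matI)
qed

lemma kf_prior_psd:
  assumes A: "A \<in> carrier_mat n n" and C: "C \<in> carrier_mat d n"
    and W: "psd_mat n W" and P0: "psd_mat n P0"
  shows "psd_mat n (kf_prior A W C (0\<^sub>m d d) P0 k)"
proof (induction k)
  case 0
  then show ?case using P0 by simp
next
  case (Suc k)
  have "psd_mat n (A * (kf_prior A W C (0\<^sub>m d d) P0 k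
      - kf_reduction C (kf_prior A W C (0\<^sub>m d d) P0 k)) * transpose_mat A + W)"
    using psd_mat_add[OF psd_mat_congruence[OF kf_posterior_psd[OF C Suc.IH] A] W] .
  then show ?case
    using kf_prior_Suc_posterior[OF A C] W Suc.IH unfolding psd_mat_def by simp
qed

lemma diag_congruence_index:
  fixes lam :: "nat \<Rightarrow> real"
  assumes Q: "Q \<in> carrier_mat n n" and a: "a < n" and b: "b < n"
  defines "A \<equiv> mat n n (\<lambda>(i, j). if i = j then lam i else 0)"
  shows "(A * Q * transpose_mat A) $$ (a, b) = lam a * lam b * Q $$ (a, b)"
proof -
  have A: "A \<in> carrier_mat n n" and A_ij: "\<And>i j. i < n \<Longrightarrow> j < n \<Longrightarrow> A $$ (i, j) = (if i = j then lam i else 0)"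
    unfolding A_def by auto
  have AQ: "(A * Q) $$ (a, l) = lam a * Q $$ (a, l)" if "l < n" for l
  proof -
    have "(A * Q) $$ (a, l) = (\<Sum>m<n. A $$ (a, m) * Q $$ (m, l))"
      using A Q a that by (simp add: index_mult_mat_sum del: index_mult_mat)
    also have "\<dots> = (\<Sum>m<n. if m = a then lam a * Q $$ (a, l) else 0)"
      using a A_ij by (intro sum.cong) auto
    finally show ?thesis using a by simp
  qed
  have "(A * Q * transpose_mat A) $$ (a, b) = (\<Sum>l<n. (A * Q) $$ (a, l) * transpose_mat A $$ (l, b))"
    by (subst index_mult_mat_sum) (use A Q a b in auto)
  also have "\<dots> = (\<Sum>l<n. if l = b then lam a * Q $$ (a, l) * lam b else 0)"
    using b A A_ij by (intro sum.cong) (auto simp: AQ)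
  finally show ?thesis using b by simp
qed

definition diag_unit :: "nat \<Rightarrow> nat \<Rightarrow> real mat" where
  "diag_unit n i = mat n n (\<lambda>(a, b). if a = i \<and> b = i then 1 else 0)"

lemma mult_diag_unit_zero_col:
  assumes C: "C \<in> carrier_mat d n" and col_zero: "\<forall>r<d. C $$ (r, i) = 0"
  shows "C * diag_unit n i = 0\<^sub>m d n"
proof (rule eq_matI)
  fix r b assume "r < dim_row (0\<^sub>m d n :: real mat)" "b < dim_col (0\<^sub>m d n :: real mat)"
  then have rb: "r < d" "b < n" by auto
  have "(C * diag_unit n i) $$ (r, b) = (\<Sum>l<n. C $$ (r, l) * diag_unit n i $$ (l, b))"
    using C rb unfolding diag_unit_def by (simp add: index_mult_mat_sum del: index_mult_mat)
  also have "\<dots> = 0" using rb col_zero unfolding diag_unit_def by (intro sum.neutral) auto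
  finally show "(C * diag_unit n i) $$ (r, b) = 0\<^sub>m d n $$ (r, b)" using rb by simp
qed (use C in \<open>auto simp: diag_unit_def\<close>)

lemma kf_reduction_minus_diag_unit:
  assumes C: "C \<in> carrier_mat d n" and col_zero: "\<forall>r<d. C $$ (r, i) = 0" and P: "P \<in> carrier_mat n n"
  shows "kf_reduction C (P - a \<cdot>\<^sub>m diag_unit n i) = kf_reduction C P"
proof -
  have E: "diag_unit n i \<in> carrier_mat n n" unfolding diag_unit_def by simp
  have CE: "C * diag_unit n i = 0\<^sub>m d n" by (rule mult_diag_unit_zero_col[OF C col_zero])
  have Et: "transpose_mat (diag_unit n i) = diag_unit n i"
    unfolding diag_unit_def by (intro eq_matI) auto
  have CP: "C * (P - a \<cdot>\<^sub>m diag_unit n i) = C * P"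
    using C P E CE
    by (simp add: mult_minus_distrib_mat[of _ d n] mult_smult_distrib) (auto intro!: eq_matI)
  have "diag_unit n i * transpose_mat C = transpose_mat (C * diag_unit n i)"
    using C E Et by (simp add: transpose_mult_dims)
  then have EC: "diag_unit n i * transpose_mat C = 0\<^sub>m n d" using CE by simp
  have PC: "(P - a \<cdot>\<^sub>m diag_unit n i) * transpose_mat C = P * transpose_mat C"
    using C P E EC
    by (simp add: minus_mult_distrib_mat[of _ n n] mult_smult_assoc_mat) (auto intro!: eq_matI)
  have "kf_reduction C Q =
      (Q * transpose_mat C) * pinv ((C * Q) * transpose_mat C + 0\<^sub>m d d) * (C * Q)"
    if "Q \<in> carrier_mat n n" for Q
    using that C pinv_carrier[of "C * Q * transpose_mat C + 0\<^sub>m d d" d d] unfolding kf_reduction_def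
    by (simp add: assoc_mult_mat_dims)
  moreover have "P - a \<cdot>\<^sub>m diag_unit n i \<in> carrier_mat n n" using E by (intro minus_carrier_mat) simp
  ultimately show ?thesis using P CP PC by simp
qed

lemma kf_prior_minus_diag_unit_psd:
  assumes C: "C \<in> carrier_mat d n" and col_zero: "\<forall>r<d. C $$ (r, i) = 0" and i: "i < n"
    and W: "W \<in> carrier_mat n n" "\<forall>a<n. \<forall>b<n. a \<noteq> b \<longrightarrow> W $$ (a, b) = 0"
    and W_psd: "psd_mat n W" and P0: "psd_mat n P0"
    and v0: "v 0 = 0" and v_Suc: "\<And>k. v (Suc k) = (lam i)\<^sup>2 * v k + W $$ (i, i)"
  defines "A \<equiv> mat n n (\<lambda>(i, j). if i = j then lam i else 0)"
  shows "psd_mat n (kf_prior A W C (0\<^sub>m d d) P0 k - v k \<cdot>\<^sub>m diag_unit n i)"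
proof (induction k)
  case 0
  have "P0 - 0 \<cdot>\<^sub>m diag_unit n i = P0"
    using P0 unfolding psd_mat_def diag_unit_def by (intro eq_matI) auto
  then show ?case using P0 v0 by simp
next
  case (Suc k)
  let ?E = "diag_unit n i"
  define P where "P = kf_prior A W C (0\<^sub>m d d) P0 k"
  define R where "R = P - v k \<cdot>\<^sub>m ?E"
  have A: "A \<in> carrier_mat n n" and E: "?E \<in> carrier_mat n n" unfolding A_def diag_unit_def by auto
  have P: "psd_mat n P" unfolding P_def A_def by (rule kf_prior_psd[OF _ C W_psd P0]) simp
  then have Pc: "P \<in> carrier_mat n n" unfolding psd_mat_def by simp
  have R: "psd_mat n R" using Suc.IH unfolding R_def P_def .
  then have Rc: "R \<in> carrier_mat n n" unfolding psd_mat_def by simp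
  have TPR: "kf_reduction C P = kf_reduction C R"
    unfolding R_def by (rule kf_reduction_minus_diag_unit[OF C col_zero Pc, symmetric])
  have T: "kf_reduction C R \<in> carrier_mat n n" by (rule kf_reduction_carrier[OF C Rc])
  define W' where "W' = W - W $$ (i, i) \<cdot>\<^sub>m ?E"
  have W': "psd_mat n W'"
    using W psd_mat_diag_nonneg[OF W_psd] E unfolding W'_def diag_unit_def
    by (intro psd_mat_diagonal) auto
  have "kf_prior A W C (0\<^sub>m d d) P0 (Suc k) - v (Suc k) \<cdot>\<^sub>m ?E
      = A * (R - kf_reduction C R) * transpose_mat A + W'"
  proof (rule eq_matI)
    fix a b assume "a < dim_row (A * (R - kf_reduction C R) * transpose_mat A + W')"
      "b < dim_col (A * (R - kf_reduction C R) * transpose_mat A + W')"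
    then have a: "a < n" and b: "b < n" using A E unfolding W'_def by auto
    have RT: "R - kf_reduction C R \<in> carrier_mat n n" and PT: "P - kf_reduction C P \<in> carrier_mat n n"
      using T TPR by auto
    show "(kf_prior A W C (0\<^sub>m d d) P0 (Suc k) - v (Suc k) \<cdot>\<^sub>m ?E) $$ (a, b) =
      (A * (R - kf_reduction C R) * transpose_mat A + W') $$ (a, b)"
      unfolding kf_prior_Suc_posterior[OF A C W(1) Pc[unfolded P_def]] P_def[symmetric]
      using a b diag_congruence_index[OF PT a b, of lam] diag_congruence_index[OF RT a b, of lam]
        Pc T E W(1) v_Suc[of k]
      by (auto simp: A_def R_def W'_def TPR diag_unit_def power2_eq_square algebra_simps)
  qed (use A E W(1) in \<open>auto simp: W'_def diag_unit_def\<close>)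
  also have "psd_mat n \<dots>"
    by (rule psd_mat_add[OF psd_mat_congruence[OF kf_posterior_psd[OF C R] A] W'])
  finally show ?case .
qed

lemma damped_recursion_limit_bounds:
  fixes s p :: "nat \<Rightarrow> real"
  assumes rec: "\<And>k. s (Suc k) = c * p k + w" and p_nonneg: "\<And>k. 0 \<le> p k" and p_le: "\<And>k. p k \<le> s k"
    and c: "0 \<le> c" "c < 1" and lim: "s \<longlonglongrightarrow> L"
  shows "w \<le> L" and "L \<le> w / (1 - c)"
proof -
  have lim_Suc: "(\<lambda>k. s (Suc k)) \<longlonglongrightarrow> L" by (rule LIMSEQ_Suc[OF lim])
  show "w \<le> L"
    using p_nonneg c by (intro LIMSEQ_le_const[OF lim_Suc]) (auto simp: rec)
  have "(\<lambda>k. c * s k + w) \<longlonglongrightarrow> c * L + w" using lim by (intro tendsto_intros)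
  then have "L \<le> c * L + w"
    using p_le c by (intro LIMSEQ_le[OF lim_Suc]) (auto simp: rec mult_left_mono)
  then show "L \<le> w / (1 - c)" using c by (simp add: pos_le_divide_eq algebra_simps)
qed

lemma affine_recursion_tendsto:
  fixes v :: "nat \<Rightarrow> real"
  assumes v0: "v 0 = 0" and v_Suc: "\<And>k. v (Suc k) = c * v k + w" and c: "\<bar>c\<bar> < 1"
  shows "v \<longlonglongrightarrow> w / (1 - c)"
proof -
  define L where "L = w / (1 - c)"
  have w: "w = L * (1 - c)" unfolding L_def using c by simp
  have v: "v k = L - c ^ k * L" for k
  proof (induction k)
    case (Suc k)
    show ?case by (simp only: v_Suc Suc.IH) (simp add: w algebra_simps)
  qed (simp add: v0)
  have "(\<lambda>k. L - c ^ k * L) \<longlonglongrightarrow> L - 0 * L"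
    using c by (intro tendsto_intros LIMSEQ_power_zero) simp
  then show ?thesis unfolding v L_def by simp
qed

lemma kf_posterior_diag_bounds:
  assumes C: "C \<in> carrier_mat d n" and P: "psd_mat n P" and i: "i < n"
  shows "0 \<le> (P - kf_reduction C P) $$ (i, i)" and "(P - kf_reduction C P) $$ (i, i) \<le> P $$ (i, i)"
proof -
  show "0 \<le> (P - kf_reduction C P) $$ (i, i)"
    by (rule psd_mat_diag_nonneg[OF kf_posterior_psd[OF C P] i])
  have "0 \<le> kf_reduction C P $$ (i, i)" by (rule psd_mat_diag_nonneg[OF kf_reduction_psd[OF C P] i])
  moreover have "kf_reduction C P \<in> carrier_mat n n"
    using kf_reduction_psd[OF C P] unfolding psd_mat_def by simp
  ultimately show "(P - kf_reduction C P) $$ (i, i) \<le> P $$ (i, i)" using i by simp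
qed

lemma kf_posterior_diag_row_space:
  assumes C: "C \<in> carrier_mat d n" and P: "psd_mat n P" and i: "i < n"
    and e: "unit_vec n i \<in> row_space C"
  shows "(P - kf_reduction C P) $$ (i, i) = 0"
proof -
  have "P - kf_reduction C P \<in> carrier_mat n n"
    using kf_posterior_psd[OF C P] unfolding psd_mat_def by simp
  then have "unit_vec n i \<bullet> ((P - kf_reduction C P) *\<^sub>v unit_vec n i) = (P - kf_reduction C P) $$ (i, i)"
    by (rule quadratic_form_unit_vec[OF _ i])
  then show ?thesis using kf_posterior_row_space[OF C P e] by linarith
qed

lemma kf_prior_diag_Suc:
  fixes lam :: "nat \<Rightarrow> real" and k :: nat
  assumes C: "C \<in> carrier_mat d n" and W: "psd_mat n W" and P0: "psd_mat n P0" and i: "i < n"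
  defines "A \<equiv> mat n n (\<lambda>(i, j). if i = j then lam i else 0)"
  defines "P \<equiv> kf_prior A W C (0\<^sub>m d d) P0 k"
  shows "kf_prior A W C (0\<^sub>m d d) P0 (Suc k) $$ (i, i) =
    (lam i)\<^sup>2 * (P - kf_reduction C P) $$ (i, i) + W $$ (i, i)"
proof -
  have A: "A \<in> carrier_mat n n" unfolding A_def by simp
  have Wc: "W \<in> carrier_mat n n" using W unfolding psd_mat_def by simp
  have Pc: "P \<in> carrier_mat n n"
    using kf_prior_psd[OF A C W P0] unfolding P_def psd_mat_def by simp
  have "P - kf_reduction C P \<in> carrier_mat n n"
    by (rule minus_carrier_mat[OF kf_reduction_carrier[OF C Pc]])
  moreover have "kf_prior A W C (0\<^sub>m d d) P0 (Suc k) = A * (P - kf_reduction C P) * transpose_mat A + W"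
    using kf_prior_Suc_posterior[OF A C Wc Pc[unfolded P_def]] unfolding P_def .
  ultimately show ?thesis
    using diag_congruence_index[of "P - kf_reduction C P" n i i lam, folded A_def] i Wc A
    by (simp add: power2_eq_square)
qed

lemma kf_limit_diag_bounds:
  fixes lam :: "nat \<Rightarrow> real"
  assumes C: "C \<in> carrier_mat d n" and i: "i < n" and lam: "\<bar>lam i\<bar> < 1"
    and W: "psd_mat n W" and P0: "psd_mat n P0"
  defines "A \<equiv> mat n n (\<lambda>(i, j). if i = j then lam i else 0)"
  assumes lim: "kf_limit n A W C (0\<^sub>m d d) P0 S"
  shows "W $$ (i, i) \<le> S $$ (i, i)" and "S $$ (i, i) \<le> W $$ (i, i) / (1 - (lam i)\<^sup>2)"
proof -
  define P where "P k = kf_prior A W C (0\<^sub>m d d) P0 k" for k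
  have P: "psd_mat n (P k)" for k
    unfolding P_def A_def by (rule kf_prior_psd[OF _ C W P0]) simp
  have conv: "(\<lambda>k. P k $$ (i, i)) \<longlonglongrightarrow> S $$ (i, i)"
    using lim i unfolding kf_limit_def P_def by simp
  have c: "0 \<le> (lam i)\<^sup>2" "(lam i)\<^sup>2 < 1" using lam by (auto simp: abs_square_less_1)
  show "W $$ (i, i) \<le> S $$ (i, i)" and "S $$ (i, i) \<le> W $$ (i, i) / (1 - (lam i)\<^sup>2)"
    using damped_recursion_limit_bounds[OF kf_prior_diag_Suc[OF C W P0 i, of lam, folded A_def P_def]
        kf_posterior_diag_bounds[OF C P i] c conv]
    by auto
qed

lemma kf_limit_diag_observed:
  fixes lam :: "nat \<Rightarrow> real"
  assumes C: "C \<in> carrier_mat d n" and i: "i < n" and e: "unit_vec n i \<in> row_space C"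
    and W: "psd_mat n W" and P0: "psd_mat n P0"
  defines "A \<equiv> mat n n (\<lambda>(i, j). if i = j then lam i else 0)"
  assumes lim: "kf_limit n A W C (0\<^sub>m d d) P0 S"
  shows "S $$ (i, i) = W $$ (i, i)"
proof -
  define P where "P k = kf_prior A W C (0\<^sub>m d d) P0 k" for k
  have P: "psd_mat n (P k)" for k
    unfolding P_def A_def by (rule kf_prior_psd[OF _ C W P0]) simp
  have "(\<lambda>k. P k $$ (i, i)) \<longlonglongrightarrow> S $$ (i, i)"
    using lim i unfolding kf_limit_def P_def by simp
  then have "(\<lambda>k. P (Suc k) $$ (i, i)) \<longlonglongrightarrow> S $$ (i, i)" by (rule LIMSEQ_Suc)
  moreover have "P (Suc k) $$ (i, i) = W $$ (i, i)" for k
    using kf_prior_diag_Suc[OF C W P0 i, of lam, folded A_def P_def]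
      kf_posterior_diag_row_space[OF C P i e] by simp
  ultimately have "(\<lambda>k. W $$ (i, i)) \<longlonglongrightarrow> S $$ (i, i)" by simp
  then show ?thesis by (simp add: LIMSEQ_const_iff)
qed

lemma kf_limit_diag_unobserved:
  fixes lam :: "nat \<Rightarrow> real"
  assumes C: "C \<in> carrier_mat d n" and col_zero: "\<forall>r<d. C $$ (r, i) = 0"
    and i: "i < n" and lam: "\<bar>lam i\<bar> < 1"
    and W: "W \<in> carrier_mat n n" "\<forall>a<n. \<forall>b<n. a \<noteq> b \<longrightarrow> W $$ (a, b) = 0"
    and W_psd: "psd_mat n W" and P0: "psd_mat n P0"
  defines "A \<equiv> mat n n (\<lambda>(i, j). if i = j then lam i else 0)"
  assumes lim: "kf_limit n A W C (0\<^sub>m d d) P0 S"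
  shows "S $$ (i, i) = W $$ (i, i) / (1 - (lam i)\<^sup>2)"
proof -
  define P where "P k = kf_prior A W C (0\<^sub>m d d) P0 k" for k
  define v where "v = rec_nat 0 (\<lambda>_ x. (lam i)\<^sup>2 * x + W $$ (i, i))"
  have "psd_mat n (P k - v k \<cdot>\<^sub>m diag_unit n i)" for k
    unfolding P_def A_def v_def
    by (rule kf_prior_minus_diag_unit_psd[OF C col_zero i W W_psd P0]) simp_all
  then have "v k \<le> P k $$ (i, i)" for k
    using psd_mat_diag_nonneg[of n "P k - v k \<cdot>\<^sub>m diag_unit n i" i] i
    unfolding psd_mat_def diag_unit_def by simp
  moreover have "v \<longlonglongrightarrow> W $$ (i, i) / (1 - (lam i)\<^sup>2)"
    using lam by (intro affine_recursion_tendsto) (simp_all add: v_def abs_square_less_1)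
  moreover have "(\<lambda>k. P k $$ (i, i)) \<longlonglongrightarrow> S $$ (i, i)"
    using lim i unfolding kf_limit_def P_def by simp
  ultimately have "W $$ (i, i) / (1 - (lam i)\<^sup>2) \<le> S $$ (i, i)"
    by (intro LIMSEQ_le) auto
  then show ?thesis
    using kf_limit_diag_bounds[OF C i lam W_psd P0 lim[unfolded A_def]] by simp
qed

theorem lemma2:
  fixes n q :: nat and lam :: "nat \<Rightarrow> real" and W P0 S :: "real mat"
    and Cs :: "nat \<Rightarrow> real mat" and mu :: "nat \<Rightarrow> bool"
  defines "A \<equiv> mat n n (\<lambda>(i, j). if i = j then lam i else 0)"
  defines "Cm \<equiv> sel_C n q Cs mu"
  assumes sensors: "\<forall>s<q. dim_col (Cs s) = n"
    and eig: "\<forall>i<n. \<bar>lam i\<bar> < 1"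
    and W_diag: "W \<in> carrier_mat n n" "\<forall>i<n. \<forall>j<n. i \<noteq> j \<longrightarrow> W $$ (i, j) = 0"
    and W_psd: "psd_mat n W"
    and P0_psd: "psd_mat n P0"
    and lim: "kf_limit n A W Cm (0\<^sub>m (dim_row Cm) (dim_row Cm)) P0 S"
  shows "(\<forall>i<n. W $$ (i, i) \<le> S $$ (i, i) \<and> S $$ (i, i) \<le> W $$ (i, i) / (1 - (lam i)\<^sup>2))
    \<and> (\<forall>i<n. W $$ (i, i) = 0 \<longrightarrow> S $$ (i, i) = 0)
    \<and> (\<forall>i<n. lam i = 0 \<longrightarrow> S $$ (i, i) = W $$ (i, i))
    \<and> (\<forall>i<n. W $$ (i, i) \<noteq> 0 \<and> (\<forall>r<dim_row Cm. Cm $$ (r, i) = 0)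
          \<longrightarrow> S $$ (i, i) = W $$ (i, i) / (1 - (lam i)\<^sup>2))
    \<and> (\<forall>i<n. unit_vec n i \<in> row_space Cm \<longrightarrow> S $$ (i, i) = W $$ (i, i))"
proof -
  have C: "Cm \<in> carrier_mat (dim_row Cm) n"
    unfolding Cm_def sel_C_def by (simp add: mat_of_rows_def)
  note lim' = lim[unfolded A_def]
  have bounds: "W $$ (i, i) \<le> S $$ (i, i)" "S $$ (i, i) \<le> W $$ (i, i) / (1 - (lam i)\<^sup>2)"
    if "i < n" for i
    using kf_limit_diag_bounds[OF C that _ W_psd P0_psd lim'] eig that by auto
  show ?thesis
  proof (intro conjI allI impI)
    fix i assume i: "i < n"
    show "W $$ (i, i) \<le> S $$ (i, i)" "S $$ (i, i) \<le> W $$ (i, i) / (1 - (lam i)\<^sup>2)"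
      by (rule bounds[OF i])+
    show "S $$ (i, i) = 0" if "W $$ (i, i) = 0"
      using bounds[OF i] that by (intro order_antisym) auto
    show "S $$ (i, i) = W $$ (i, i)" if "lam i = 0"
      using bounds[OF i] that by (intro order_antisym) auto
    show "S $$ (i, i) = W $$ (i, i) / (1 - (lam i)\<^sup>2)"
      if "W $$ (i, i) \<noteq> 0 \<and> (\<forall>r<dim_row Cm. Cm $$ (r, i) = 0)"
      using that eig i by (intro kf_limit_diag_unobserved[OF C _ i _ W_diag W_psd P0_psd lim']) auto
    show "S $$ (i, i) = W $$ (i, i)" if "unit_vec n i \<in> row_space Cm"
      by (rule kf_limit_diag_observed[OF C i that W_psd P0_psd lim'])
  qed
qed

end
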